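(* For any given natural number $m$, the Goodstein sequence $G(m)$ converges (i.e. reaches $0$ after finitely many terms) if and only if it is bounded, i.e. there is a natural number $B$ with $G(n,m)\le B$ for all terms $G(n,m)$ of $G(m)$.
   Context: For a natural number base $b>1$, the hereditary representation $m\langle b\rangle$ of a natural number $m$ is its expression as $\sum_{i=0}^{l} a_i b^{i}$ with $0\le a_i<b$, $a_l\neq 0$, where every exponent is itself written in hereditary representation in base $b$, recursively. The partial Goodstein operation sends $m$ (in base $b$) to $m\langle b\rangle''$, obtained by syntactically replacing every occurrence of $b$ by $b+1$ in $m\langle b\rangle$. The Goodstein sequence $G(m)$ of $m$ is $\{m,\ m''-1,\ (m''-1)''-1,\ \dots\}$, starting from the hereditary representation of $m$ in base $2$; its $n$-th term is $G(n,m)$, with $G(1,m)=m$ in base $2$, $G(k,m)$ written in base $k+1$, and $G(k+1,m)=G(k,m)\langle k+1\rangle''-1$; the sequence stops once a term equals $0$. *)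

theory Defs
  imports Main
begin

text \<open>Hereditary base bump: m written in hereditary base b, every occurrence of b
replaced by b+1. Writing m = sum_i a_i b^i (digits a_i = m div b^i mod b; all digits
with i \<ge> m vanish), we get bump b m = sum_i a_i (b+1)^(bump b i), exponents bumped
recursively.\<close>

function bump :: "nat \<Rightarrow> nat \<Rightarrow> nat" where
  "bump b m = (if b < 2 then m
               else (\<Sum>i<m. (m div b ^ i mod b) * (b + 1) ^ bump b i))"
  by pat_completeness auto
termination
  by (relation "measure (\<lambda>(b, m). m)") simp_all

declare bump.simps [simp del]

text \<open>Goodstein sequence: goodstein n m is the n-th term G(n,m) (n \<ge> 1);
G(1,m) = m, G(k+1,m) = bump (k+1) (G(k,m)) - 1. Once a term is 0 all later
values are 0 (truncated subtraction). The value at n = 0 is a junk value.\<close>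

fun goodstein :: "nat \<Rightarrow> nat \<Rightarrow> nat" where
  "goodstein 0 m = m"
| "goodstein (Suc 0) m = m"
| "goodstein (Suc (Suc k)) m = bump (Suc (Suc k)) (goodstein (Suc k) m) - 1"

end

theory Submission
  imports Defs
begin

text \<open>A term smaller than the current base is a single digit, so the hereditary bump leaves
it unchanged. Hence once a bound B is below the base, every further step merely subtracts 1,
and the sequence reaches 0 within B more steps. Conversely, 0 is absorbing, so a sequence that
reaches 0 takes only finitely many values.\<close>

lemma bump_0 [simp]: "bump b 0 = 0"
  by (subst bump.simps) simp

lemma bump_less_base:
  assumes "x < b"
  shows "bump b x = x"
proof (cases "b < 2 \<or> x = 0")
  case True
  then show ?thesis by (subst bump.simps) auto
next
  case False
  then obtain y where x: "x = Suc y" and "b \<ge> 2"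
    using not0_implies_Suc by auto
  have "x div b ^ Suc i = 0" for i
  proof -
    have "b \<le> b ^ Suc i" using \<open>b \<ge> 2\<close> by simp
    then show ?thesis using assms by (simp add: div_eq_0_iff del: power_Suc)
  qed
  then have "(\<Sum>i<x. (x div b ^ i mod b) * (b + 1) ^ bump b i) = x"
    using assms unfolding x sum.lessThan_Suc_shift by simp
  then show ?thesis
    using False by (subst bump.simps) simp
qed

lemma goodstein_Suc:
  assumes "n \<ge> 1"
  shows "goodstein (Suc n) m = bump (Suc n) (goodstein n m) - 1"
  using assms by (cases n) auto

lemma goodstein_zero_absorbing:
  assumes "goodstein n m = 0" "n \<le> k"
  shows "goodstein k m = 0"
  using assms(2)
proof (induction k rule: dec_induct)
  case base
  show ?case using assms(1) .
next
  case (step k)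
  then show ?case
    by (cases k) (simp_all add: goodstein_Suc)
qed

lemma goodstein_Suc_below_base:
  assumes "n \<ge> 1" "goodstein n m \<le> n"
  shows "goodstein (Suc n) m = goodstein n m - 1"
  using assms by (simp add: goodstein_Suc bump_less_base)

lemma goodstein_countdown:
  assumes "b \<ge> 1" and "\<And>n. n \<ge> b \<Longrightarrow> goodstein n m \<le> n"
  shows "goodstein (b + j) m = goodstein b m - j"
proof (induction j)
  case 0
  show ?case by simp
next
  case (Suc j)
  have "goodstein (b + Suc j) m = goodstein (b + j) m - 1"
    using assms by (simp add: goodstein_Suc_below_base)
  then show ?case using Suc by simp
qed

theorem mainTheorem2:
  fixes m :: nat
  shows "(\<exists>n\<ge>1. goodstein n m = 0) \<longleftrightarrow> (\<exists>B::nat. \<forall>n\<ge>1. goodstein n m \<le> B)"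
proof
  assume "\<exists>n\<ge>1. goodstein n m = 0"
  then obtain n where n: "goodstein n m = 0" by blast
  have "goodstein k m \<le> Max ((\<lambda>i. goodstein i m) ` {..n})" for k
  proof (cases "k \<le> n")
    case True
    then show ?thesis by (intro Max_ge) auto
  next
    case False
    then show ?thesis using goodstein_zero_absorbing[OF n] by simp
  qed
  then show "\<exists>B. \<forall>n\<ge>1. goodstein n m \<le> B" by blast
next
  assume "\<exists>B. \<forall>n\<ge>1. goodstein n m \<le> B"
  then obtain B where B: "\<And>n. n \<ge> 1 \<Longrightarrow> goodstein n m \<le> B" by blast
  have "goodstein (Suc B + B) m = goodstein (Suc B) m - B"
    by (rule goodstein_countdown) (auto intro: le_trans[OF B])
  also have "\<dots> = 0" using B[of "Suc B"] by simp
  finally show "\<exists>n\<ge>1. goodstein n m = 0" by (intro exI[of _ "Suc B + B"]) simp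
qed

end
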